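(* Let $m \in \mathbb{N}$ with $m\ge 2$ and $r_m = \sqrt{\frac{2(m+1)}{m}}$, and let $\Phi$ be the map defined in the context. Then for all $[x],[y]\in\mathbb{RP}^m(r_m)$ (with representatives $x,y \in \mathbb{S}^m(r_m)$), $$\|\Phi([x]) - \Phi([y])\|^2 = -\frac{m}{2(m+1)}\langle x,y\rangle^2 + \frac{2(m+1)}{m}.$$ Consequently, for any random variable $X$ with values in $\mathbb{RP}^m(r_m)$, $$\operatorname{argmax}_{[y]\in\mathbb{RP}^m(r_m)} \mathbb{E}[\langle X,y\rangle^2] = \operatorname{argmin}_{[y]\in\mathbb{RP}^m(r_m)} \mathbb{E}\big[\|\Phi([X]) - \Phi([y])\|^2\big].$$
   Context: For $r>0$, $\mathbb{S}^m(r)\subset\mathbb{R}^{m+1}$ is the sphere of radius $r$ centered at $0$, and $\mathbb{RP}^m(r) = \{[x] : x \in \mathbb{S}^m(r)\}$ with $[x]=\{x,-x\}$; $\langle x,y\rangle^2$ does not depend on the choice of representatives. Define $F_m:\mathbb{R}^{m+1}\times\mathbb{R}^{m+1}\to\mathbb{R}^{\frac{m(m+3)}{2}}$ recursively by $F_1((x_1,x_2),(y_1,y_2)) = (x_1y_1 - x_2y_2,\ x_1y_2 + x_2y_1)$ and, for $x,y\in\mathbb{R}^{m+1}$, $x_{m+2},y_{m+2}\in\mathbb{R}$, $F_{m+1}((x,x_{m+2}),(y,y_{m+2})) = \big(F_m(x,y),\ x_{m+2}y + y_{m+2}x,\ \tau_{m+1}(\langle x,y\rangle - (m+1)x_{m+2}y_{m+2})\big)$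 with $\tau_{m+1} = \sqrt{\frac{2}{(m+1)(m+2)}}$. Then $\Phi([x]) := \frac12\sqrt{\frac{m}{2(m+1)}}\,F_m(x,x)$ for $x \in \mathbb{S}^m(r_m)$ (this is an isometric embedding of $\mathbb{RP}^m(r_m)$, with the metric induced from the round sphere, into the unit sphere $\mathbb{S}^{\frac{m(m+3)}{2}-1}$). *)

theory Defs
  imports "HOL-Probability.Probability"
begin

text \<open>Points of R^(m+1) are represented as functions nat => real; only the
coordinates 0..m are used (coordinate i corresponds to x_(i+1)).\<close>

definition sph :: "nat \<Rightarrow> real \<Rightarrow> (nat \<Rightarrow> real) set" where
  "sph m r = {x. (\<forall>i>m. x i = 0) \<and> (\<Sum>i\<le>m. (x i)\<^sup>2) = r\<^sup>2}"

definition inner_m :: "nat \<Rightarrow> (nat \<Rightarrow> real) \<Rightarrow> (nat \<Rightarrow> real) \<Rightarrow> real" where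
  "inner_m m x y = (\<Sum>i\<le>m. x i * y i)"

definition proj_cls :: "(nat \<Rightarrow> real) \<Rightarrow> (nat \<Rightarrow> real) set" where
  "proj_cls x = {x, - x}"

definition RP :: "nat \<Rightarrow> real \<Rightarrow> (nat \<Rightarrow> real) set set" where
  "RP m r = proj_cls ` sph m r"

definition tau :: "nat \<Rightarrow> real" where
  "tau n = sqrt (2 / (real n * (real n + 1)))"

text \<open>F m acts on real lists of length m+1 and returns a list of length m(m+3)/2.\<close>
fun F :: "nat \<Rightarrow> real list \<Rightarrow> real list \<Rightarrow> real list" where
  "F 0 xs ys = []"
| "F (Suc 0) xs ys = [xs!0 * ys!0 - xs!1 * ys!1, xs!0 * ys!1 + xs!1 * ys!0]"
| "F (Suc (Suc k)) xs ys =
     (let m = Suc k; x = take (m+1) xs; y = take (m+1) ys; a = xs ! (m+1); b = ys ! (m+1)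
      in F m x y @ map2 (\<lambda>xi yi. a * yi + b * xi) x y
           @ [tau (m+1) * (sum_list (map2 (*) x y) - real (m+1) * a * b)])"

definition vec_list :: "nat \<Rightarrow> (nat \<Rightarrow> real) \<Rightarrow> real list" where
  "vec_list m x = map x [0..<m+1]"

definition Phi :: "nat \<Rightarrow> (nat \<Rightarrow> real) \<Rightarrow> real list" where
  "Phi m x = map (\<lambda>t. (1/2) * sqrt (real m / (2 * (real m + 1))) * t)
               (F m (vec_list m x) (vec_list m x))"

definition sqdist_list :: "real list \<Rightarrow> real list \<Rightarrow> real" where
  "sqdist_list u v = sum_list (map2 (\<lambda>a b. (a - b)\<^sup>2) u v)"

definition r_m :: "nat \<Rightarrow> real" where
  "r_m m = sqrt (2 * (real m + 1) / real m)"

end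

theory Submission
  imports Defs
begin

text \<open>Up to the factor sqrt 2, F(x, x) is an isometric image of the traceless part
x x^T - |x|^2/(m+1) I of x x^T, so that
  <F(x, x), F(y, y)> = 2 <x, y>^2 - 2/(m+1) |x|^2 |y|^2,
which is proved by induction along the recursion defining F. On the sphere of radius r this gives
|F(x, x) - F(y, y)|^2 = 4 (r^4 - <x, y>^2), so the squared distance between Phi-images is a strictly
decreasing affine function of <x, y>^2. Taking expectations, the expected squared distance to
Phi([y]) is a strictly decreasing affine function of E <X, y>^2, so both have the same optimisers.\<close>

definition dot_list :: "real list \<Rightarrow> real list \<Rightarrow> real" where
  "dot_list u v = sum_list (map2 (*) u v)"

lemma dot_list_append:
  "length u = length v \<Longrightarrow> dot_list (u @ u') (v @ v') = dot_list u v + dot_list u' v'"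
  by (simp add: dot_list_def)

lemma dot_list_singleton [simp]: "dot_list [a] [b] = a * b"
  by (simp add: dot_list_def)

lemma dot_list_scale:
  "dot_list (map (\<lambda>t. c * t) u) (map (\<lambda>t. d * t) v) = c * d * dot_list u v"
  by (induction u v rule: list_induct2') (auto simp: dot_list_def algebra_simps)

lemma dot_list_vec_list: "dot_list (vec_list m x) (vec_list m y) = inner_m m x y"
proof -
  have "dot_list (vec_list m x) (vec_list m y) = (\<Sum>i\<leftarrow>[0..<m+1]. x i * y i)"
    by (simp add: dot_list_def vec_list_def zip_map_map zip_same_conv_map comp_def)
  also have "\<dots> = (\<Sum>i\<in>{0..<m+1}. x i * y i)"
    by (simp add: sum_list_distinct_conv_sum_set)
  also have "{0..<m+1} = {..m}"
    by auto
  finally show ?thesis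
    by (simp add: inner_m_def)
qed

lemma sqdist_list_eq_dot_list:
  "length u = length v \<Longrightarrow> sqdist_list u v = dot_list u u + dot_list v v - 2 * dot_list u v"
  by (induction u v rule: list_induct2)
    (auto simp: sqdist_list_def dot_list_def power2_eq_square algebra_simps)

lemma sqdist_list_scale:
  "sqdist_list (map (\<lambda>t. c * t) u) (map (\<lambda>t. c * t) v) = c\<^sup>2 * sqdist_list u v"
  by (induction u v rule: list_induct2') (auto simp: sqdist_list_def power2_eq_square algebra_simps)

lemma inner_m_self_sph: "x \<in> sph m r \<Longrightarrow> inner_m m x x = r\<^sup>2"
  by (simp add: sph_def inner_m_def power2_eq_square)

lemma inner_m_sq_le_sph:
  assumes "x \<in> sph m r" "z \<in> sph m r"
  shows "(inner_m m x z)\<^sup>2 \<le> r ^ 4"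
  using Cauchy_Schwarz_ineq_sum[of x z "{..m}"] assms
  by (simp add: inner_m_def sph_def power_mult_distrib flip: power_add)

lemma length_F:
  "length xs = m + 1 \<Longrightarrow> length ys = m + 1 \<Longrightarrow> 2 * length (F m xs ys) = m * (m + 3)"
  by (induction m xs ys rule: F.induct) (auto simp: Let_def algebra_simps)

lemma dot_list_F_diag:
  assumes "m \<ge> 1" "length x = m + 1" "length y = m + 1"
  shows "dot_list (F m x x) (F m y y)
           = 2 * (dot_list x y)\<^sup>2 - 2 / (real m + 1) * dot_list x x * dot_list y y"
  using assms
proof (induction m arbitrary: x y rule: nat_induct_at_least)
  case base
  then obtain a b c d where "x = [a, b]" "y = [c, d]"
    by (auto simp: length_Suc_conv numeral_2_eq_2)
  then show ?case
    by (simp add: dot_list_def power2_eq_square field_simps)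
next
  case (Suc n)
  then obtain k where n: "n = Suc k"
    by (cases n) auto
  obtain x' a where x: "x = x' @ [a]"
    using Suc.prems by (cases x rule: rev_exhaust) auto
  obtain y' b where y: "y = y' @ [b]"
    using Suc.prems by (cases y rule: rev_exhaust) auto
  have len: "length x' = n + 1" "length y' = n + 1"
    using Suc.prems by (simp_all add: x y)
  define P X Y where "P = dot_list x' y'" and "X = dot_list x' x'" and "Y = dot_list y' y'"
  have dots: "dot_list x y = P + a * b" "dot_list x x = X + a * a" "dot_list y y = Y + b * b"
    using len by (simp_all add: x y P_def X_def Y_def dot_list_append)
  have map2_diag: "map2 (\<lambda>xi yi. c * yi + c * xi) u u = map (\<lambda>t. (2 * c) * t) u" for c :: real and u
    by (induction u) (auto simp: algebra_simps)
  have tau_sq: "(tau (n + 1))\<^sup>2 = 2 / ((real n + 1) * (real n + 2))"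
    by (simp add: tau_def algebra_simps)
  have Fx: "F (Suc n) x x
             = F n x' x' @ map (\<lambda>t. (2 * a) * t) x' @ [tau (n + 1) * (X - real (n + 1) * a * a)]"
    using len by (simp add: x n Let_def nth_append map2_diag X_def dot_list_def)
  have Fy: "F (Suc n) y y
             = F n y' y' @ map (\<lambda>t. (2 * b) * t) y' @ [tau (n + 1) * (Y - real (n + 1) * b * b)]"
    using len by (simp add: y n Let_def nth_append map2_diag Y_def dot_list_def)
  have "dot_list (F (Suc n) x x) (F (Suc n) y y)
          = dot_list (F n x' x') (F n y' y') + 4 * a * b * P
            + (tau (n + 1))\<^sup>2 * (X - real (n + 1) * a * a) * (Y - real (n + 1) * b * b)"
    using len length_F[OF len(1) len(1)] length_F[OF len(2) len(2)]
    by (simp add: Fx Fy dot_list_append dot_list_scale P_def power2_eq_square)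
  also have "\<dots> = 2 * (P + a * b)\<^sup>2 - 2 / (real n + 2) * (X + a * a) * (Y + b * b)"
    unfolding Suc.IH[OF len] tau_sq P_def[symmetric] X_def[symmetric] Y_def[symmetric]
    by (simp add: divide_simps add_pos_pos) (simp add: algebra_simps power2_eq_square)
  finally show ?case
    by (simp add: dots add_ac)
qed

lemma sqdist_list_F_sph:
  assumes "m \<ge> 1" "x \<in> sph m r" "y \<in> sph m r"
  shows "sqdist_list (F m (vec_list m x) (vec_list m x)) (F m (vec_list m y) (vec_list m y))
           = 4 * (r ^ 4 - (inner_m m x y)\<^sup>2)"
proof -
  have len: "length (vec_list m z) = m + 1" for z
    by (simp add: vec_list_def)
  have dot_F: "dot_list (F m (vec_list m z) (vec_list m z)) (F m (vec_list m w) (vec_list m w))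
                 = 2 * (inner_m m z w)\<^sup>2 - 2 / (real m + 1) * inner_m m z z * inner_m m w w" for z w
    using dot_list_F_diag[OF assms(1) len len] by (simp add: dot_list_vec_list)
  have "length (F m (vec_list m x) (vec_list m x)) = length (F m (vec_list m y) (vec_list m y))"
    using length_F[OF len[of x] len[of x]] length_F[OF len[of y] len[of y]] by simp
  then show ?thesis
    by (simp add: sqdist_list_eq_dot_list dot_F inner_m_self_sph[OF assms(2)]
        inner_m_self_sph[OF assms(3)] algebra_simps power2_eq_square power4_eq_xxxx)
qed

lemma sqdist_list_Phi:
  assumes "m \<ge> 1" "x \<in> sph m (r_m m)" "y \<in> sph m (r_m m)"
  shows "sqdist_list (Phi m x) (Phi m y)
           = - (real m / (2 * (real m + 1))) * (inner_m m x y)\<^sup>2 + 2 * (real m + 1) / real m"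
proof -
  have c_sq: "((1/2) * sqrt (real m / (2 * (real m + 1))))\<^sup>2 = real m / (8 * (real m + 1))"
    unfolding power_mult_distrib real_sqrt_pow2[OF divide_nonneg_nonneg[OF of_nat_0_le_iff]]
    by (simp add: power2_eq_square)
  have r_pow4: "r_m m ^ 4 = (2 * (real m + 1) / real m)\<^sup>2"
    using power_mult[of "r_m m" 2 2] by (simp add: r_m_def)
  have "sqdist_list (Phi m x) (Phi m y)
          = real m / (8 * (real m + 1)) * (4 * ((2 * (real m + 1) / real m)\<^sup>2 - (inner_m m x y)\<^sup>2))"
    unfolding Phi_def sqdist_list_scale c_sq sqdist_list_F_sph[OF assms] r_pow4 ..
  also have "\<dots> = - (real m / (2 * (real m + 1))) * (inner_m m x y)\<^sup>2 + 2 * (real m + 1) / real m"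
    using assms(1) by (simp add: divide_simps) (simp add: algebra_simps power2_eq_square)
  finally show ?thesis .
qed

lemma maximizers_eq_minimizers_comp_decreasing:
  fixes g :: "'a \<Rightarrow> 'b::linorder" and \<phi> :: "'b \<Rightarrow> 'c::linorder"
  assumes decreasing: "\<And>s t. s < t \<Longrightarrow> \<phi> t < \<phi> s"
    and f: "\<And>y. y \<in> S \<Longrightarrow> f y = \<phi> (g y)"
  shows "{h y | y. y \<in> S \<and> (\<forall>z\<in>S. g z \<le> g y)} = {h y | y. y \<in> S \<and> (\<forall>z\<in>S. f y \<le> f z)}"
proof -
  have "\<phi> t \<le> \<phi> s \<longleftrightarrow> s \<le> t" for s t
    by (cases s t rule: linorder_cases) (auto dest: decreasing)
  then show ?thesis
    using f by auto
qed

lemma (in finite_measure) integrable_inner_m_sq: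
  assumes "\<And>i. (\<lambda>\<omega>. X \<omega> i) \<in> borel_measurable M"
    and "\<And>\<omega>. \<omega> \<in> space M \<Longrightarrow> X \<omega> \<in> sph m r" and "z \<in> sph m r"
  shows "integrable M (\<lambda>\<omega>. (inner_m m (X \<omega>) z)\<^sup>2)"
proof (rule integrable_const_bound[where B = "r ^ 4"])
  show "AE \<omega> in M. norm ((inner_m m (X \<omega>) z)\<^sup>2) \<le> r ^ 4"
    using assms(2,3) inner_m_sq_le_sph by (intro AE_I2) simp
  note [measurable] = assms(1)
  show "(\<lambda>\<omega>. (inner_m m (X \<omega>) z)\<^sup>2) \<in> borel_measurable M"
    unfolding inner_m_def by measurable
qed

lemma (in prob_space) integral_sqdist_list_Phi:
  assumes "m \<ge> 1" and "\<And>i. (\<lambda>\<omega>. X \<omega> i) \<in> borel_measurable M"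
    and "\<And>\<omega>. \<omega> \<in> space M \<Longrightarrow> X \<omega> \<in> sph m (r_m m)" and "y \<in> sph m (r_m m)"
  shows "(\<integral>\<omega>. sqdist_list (Phi m (X \<omega>)) (Phi m y) \<partial>M)
           = 2 * (real m + 1) / real m
             - real m / (2 * (real m + 1)) * (\<integral>\<omega>. (inner_m m (X \<omega>) y)\<^sup>2 \<partial>M)"
proof -
  have "(\<integral>\<omega>. sqdist_list (Phi m (X \<omega>)) (Phi m y) \<partial>M)
          = (\<integral>\<omega>. 2 * (real m + 1) / real m
                  - real m / (2 * (real m + 1)) * (inner_m m (X \<omega>) y)\<^sup>2 \<partial>M)"
    using assms(1,3,4) by (intro Bochner_Integration.integral_cong) (simp_all add: sqdist_list_Phi)
  also have "\<dots> = 2 * (real m + 1) / real m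
                    - real m / (2 * (real m + 1)) * (\<integral>\<omega>. (inner_m m (X \<omega>) y)\<^sup>2 \<partial>M)"
    using integrable_inner_m_sq[OF assms(2,3,4)] by (simp add: prob_space)
  finally show ?thesis .
qed

lemma (in prob_space) argmax_inner_m_sq_eq_argmin_sqdist_list_Phi:
  assumes "m \<ge> 1" and "\<And>i. (\<lambda>\<omega>. X \<omega> i) \<in> borel_measurable M"
    and "\<And>\<omega>. \<omega> \<in> space M \<Longrightarrow> X \<omega> \<in> sph m (r_m m)"
  shows "{proj_cls y | y. y \<in> sph m (r_m m) \<and>
            (\<forall>z \<in> sph m (r_m m). (\<integral>\<omega>. (inner_m m (X \<omega>) z)\<^sup>2 \<partial>M)
                                   \<le> (\<integral>\<omega>. (inner_m m (X \<omega>) y)\<^sup>2 \<partial>M))}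
       = {proj_cls y | y. y \<in> sph m (r_m m) \<and>
            (\<forall>z \<in> sph m (r_m m). (\<integral>\<omega>. sqdist_list (Phi m (X \<omega>)) (Phi m y) \<partial>M)
                                   \<le> (\<integral>\<omega>. sqdist_list (Phi m (X \<omega>)) (Phi m z) \<partial>M))}"
  using assms
  by (intro maximizers_eq_minimizers_comp_decreasing
      [where \<phi> = "\<lambda>t. 2 * (real m + 1) / real m - real m / (2 * (real m + 1)) * t"])
    (simp_all add: integral_sqdist_list_Phi divide_strict_right_mono)

theorem theorem3p14:
  fixes m :: nat and M :: "'a measure" and X :: "'a \<Rightarrow> nat \<Rightarrow> real"
  assumes "m \<ge> 2"
  shows "(\<forall>x \<in> sph m (r_m m). \<forall>y \<in> sph m (r_m m).
            sqdist_list (Phi m x) (Phi m y)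
              = - (real m / (2 * (real m + 1))) * (inner_m m x y)\<^sup>2 + 2 * (real m + 1) / real m)
     \<and> (prob_space M \<longrightarrow> (\<forall>i. (\<lambda>\<omega>. X \<omega> i) \<in> borel_measurable M)
        \<longrightarrow> (\<forall>\<omega>\<in>space M. X \<omega> \<in> sph m (r_m m))
        \<longrightarrow> {proj_cls y | y. y \<in> sph m (r_m m) \<and>
               (\<forall>z \<in> sph m (r_m m). (\<integral>\<omega>. (inner_m m (X \<omega>) z)\<^sup>2 \<partial>M)
                                      \<le> (\<integral>\<omega>. (inner_m m (X \<omega>) y)\<^sup>2 \<partial>M))}
          = {proj_cls y | y. y \<in> sph m (r_m m) \<and>
               (\<forall>z \<in> sph m (r_m m). (\<integral>\<omega>. sqdist_list (Phi m (X \<omega>)) (Phi m y) \<partial>M)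
                                      \<le> (\<integral>\<omega>. sqdist_list (Phi m (X \<omega>)) (Phi m z) \<partial>M))})"
proof -
  have m: "m \<ge> 1"
    using assms by simp
  show ?thesis
    using sqdist_list_Phi[OF m] prob_space.argmax_inner_m_sq_eq_argmin_sqdist_list_Phi[OF _ m]
    by (intro conjI impI ballI) (simp, blast)
qed

end
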